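(* Every finitely generated non-abelian free group is Hucha with respect to the family of its finitely generated infinite-index subgroups.
   Context: A positive cone of a group $G$ is a subsemigroup $P$ with $G=P\sqcup P^{-1}\sqcup\{1\}$. With a finite symmetric generating set $X$ and word metric $d_X$, an $r$-path is a sequence $g_0,\dots,g_n$ with $d_X(g_i,g_{i+1})\le r$. A set $S$ $r$-disconnects subsets $H_1,H_2$ if every $r$-path from $H_1$ to $H_2$ meets $S$; $S$ $r$-disconnects $P$ if there are $u,v\in P$ with $S$ $r$-disconnecting $\{u\},\{v\}$. A negative swamp of width $r$ for a subgroup $H$ (with respect to $P$) is $S\subseteq P^{-1}$ that $r$-disconnects $P$ and $r$-disconnects $g_1H,g_2H$ for some $g_1,g_2\in G$. A finitely generated left-orderable group $G$ is Hucha with respect to a family $\mathcal{H}$ of subgroups if for some (equivalently any) finite generating set, for every positive cone $P$, every $H\in\mathcal{H}$ and every $r>0$ there is a negative swamp of width $r$ for $H$. *)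

theory Defs
  imports "HOL-Algebra.Algebra"
begin

text \<open>A word over a set of letters: a letter (s, True) stands for s, (s, False) for s inverse.\<close>

definition eval_word :: "('a, 'b) monoid_scheme \<Rightarrow> ('a \<times> bool) list \<Rightarrow> 'a" where
  "eval_word G w = foldr (\<lambda>(s, e) acc. (if e then s else inv\<^bsub>G\<^esub> s) \<otimes>\<^bsub>G\<^esub> acc) w \<one>\<^bsub>G\<^esub>"

definition reduced_word :: "('a \<times> bool) list \<Rightarrow> bool" where
  "reduced_word w \<longleftrightarrow> (\<forall>i. Suc i < length w \<longrightarrow>
      \<not> (fst (w ! i) = fst (w ! Suc i) \<and> snd (w ! i) \<noteq> snd (w ! Suc i)))"

definition free_basis :: "('a, 'b) monoid_scheme \<Rightarrow> 'a set \<Rightarrow> bool" where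
  "free_basis G S \<longleftrightarrow> S \<subseteq> carrier G \<and> generate G S = carrier G \<and>
     (\<forall>w. w \<noteq> [] \<and> reduced_word w \<and> fst ` set w \<subseteq> S \<longrightarrow> eval_word G w \<noteq> \<one>\<^bsub>G\<^esub>)"

definition free_group :: "('a, 'b) monoid_scheme \<Rightarrow> bool" where
  "free_group G \<longleftrightarrow> group G \<and> (\<exists>S. free_basis G S)"

definition finitely_generated :: "('a, 'b) monoid_scheme \<Rightarrow> bool" where
  "finitely_generated G \<longleftrightarrow> (\<exists>T. finite T \<and> T \<subseteq> carrier G \<and> generate G T = carrier G)"

definition positive_cone :: "('a, 'b) monoid_scheme \<Rightarrow> 'a set \<Rightarrow> bool" where
  "positive_cone G P \<longleftrightarrow> P \<subseteq> carrier G \<and>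
     (\<forall>x\<in>P. \<forall>y\<in>P. x \<otimes>\<^bsub>G\<^esub> y \<in> P) \<and>
     carrier G = P \<union> (m_inv G ` P) \<union> {\<one>\<^bsub>G\<^esub>} \<and>
     P \<inter> (m_inv G ` P) = {} \<and> \<one>\<^bsub>G\<^esub> \<notin> P \<and> \<one>\<^bsub>G\<^esub> \<notin> m_inv G ` P"

definition left_orderable :: "('a, 'b) monoid_scheme \<Rightarrow> bool" where
  "left_orderable G \<longleftrightarrow> (\<exists>P. positive_cone G P)"

definition word_length :: "('a, 'b) monoid_scheme \<Rightarrow> 'a set \<Rightarrow> 'a \<Rightarrow> nat" where
  "word_length G T g = (LEAST n. \<exists>xs. length xs = n \<and> set xs \<subseteq> T \<and>
       foldr (\<otimes>\<^bsub>G\<^esub>) xs \<one>\<^bsub>G\<^esub> = g)"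

definition word_dist :: "('a, 'b) monoid_scheme \<Rightarrow> 'a set \<Rightarrow> 'a \<Rightarrow> 'a \<Rightarrow> nat" where
  "word_dist G T g h = word_length G T (inv\<^bsub>G\<^esub> g \<otimes>\<^bsub>G\<^esub> h)"

definition r_path :: "('a, 'b) monoid_scheme \<Rightarrow> 'a set \<Rightarrow> nat \<Rightarrow> 'a list \<Rightarrow> bool" where
  "r_path G T r p \<longleftrightarrow> p \<noteq> [] \<and> set p \<subseteq> carrier G \<and>
     (\<forall>i. Suc i < length p \<longrightarrow> word_dist G T (p ! i) (p ! Suc i) \<le> r)"

definition r_disconnects :: "('a, 'b) monoid_scheme \<Rightarrow> 'a set \<Rightarrow> nat \<Rightarrow> 'a set \<Rightarrow> 'a set \<Rightarrow> 'a set \<Rightarrow> bool" where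
  "r_disconnects G T r S H1 H2 \<longleftrightarrow>
     (\<forall>p. r_path G T r p \<and> hd p \<in> H1 \<and> last p \<in> H2 \<longrightarrow> set p \<inter> S \<noteq> {})"

definition r_disconnects_cone :: "('a, 'b) monoid_scheme \<Rightarrow> 'a set \<Rightarrow> nat \<Rightarrow> 'a set \<Rightarrow> 'a set \<Rightarrow> bool" where
  "r_disconnects_cone G T r S P \<longleftrightarrow> (\<exists>u\<in>P. \<exists>v\<in>P. r_disconnects G T r S {u} {v})"

definition negative_swamp :: "('a, 'b) monoid_scheme \<Rightarrow> 'a set \<Rightarrow> 'a set \<Rightarrow> 'a set \<Rightarrow> nat \<Rightarrow> 'a set \<Rightarrow> bool" where
  "negative_swamp G T P H r S \<longleftrightarrow> S \<subseteq> m_inv G ` P \<and> r_disconnects_cone G T r S P \<and>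
     (\<exists>g1\<in>carrier G. \<exists>g2\<in>carrier G. r_disconnects G T r S (g1 <#\<^bsub>G\<^esub> H) (g2 <#\<^bsub>G\<^esub> H))"

text \<open>Hucha property, using an arbitrary finite symmetric generating set
  (the paper shows that "some" and "any" are equivalent; we use "any").\<close>
definition hucha :: "('a, 'b) monoid_scheme \<Rightarrow> 'a set set \<Rightarrow> bool" where
  "hucha G \<H> \<longleftrightarrow> group G \<and> finitely_generated G \<and> left_orderable G \<and>
     (\<forall>T. finite T \<and> T \<subseteq> carrier G \<and> m_inv G ` T = T \<and> generate G T = carrier G \<longrightarrow>
       (\<forall>P. positive_cone G P \<longrightarrow> (\<forall>H\<in>\<H>. \<forall>r>0. \<exists>S. negative_swamp G T P H r S)))"

definition fg_infinite_index_subgroups :: "('a, 'b) monoid_scheme \<Rightarrow> 'a set set" where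
  "fg_infinite_index_subgroups G = {H. subgroup H G \<and>
      (\<exists>Y. finite Y \<and> Y \<subseteq> H \<and> generate G Y = H) \<and> infinite (rcosets\<^bsub>G\<^esub> H)}"

end

theory Submission
  imports Defs "HOL-Library.Sublist" "HOL-Library.Countable_Set" "HOL-Library.Product_Lexorder"
begin

(* Normal forms make the free group a tree. Seen from a point g, every z far from g lies in the
   branch given by the first letter of the normal form of g^-1 z, and an r-path that avoids the
   translated ball g B_R (R proportional to r) never changes branch. The finite ball B_R has a
   largest element M for the left order given by P, so for p in P the translate by g = (M p)^-1
   lies in P^-1. Multiplying a point of P by a suitable conjugate of a basis letter moves it to
   another branch at g while staying in P. If H is finitely generated of infinite index, some
   reduced word is a prefix of no normal form of an element of H; this yields two cosets of H
   lying in different branches at g. Left orderability of the free group itself comes from the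
   Magnus embedding into power series in noncommuting variables, ordered by the sign of the
   first nonzero coefficient. *)

section \<open>Reduced words\<close>

definition inv_letter :: "'a \<times> bool \<Rightarrow> 'a \<times> bool" where
  "inv_letter x = (fst x, \<not> snd x)"

definition inv_word :: "('a \<times> bool) list \<Rightarrow> ('a \<times> bool) list" where
  "inv_word w = rev (map inv_letter w)"

lemma inv_letter_inv_letter [simp]: "inv_letter (inv_letter x) = x"
  and inv_letter_neq [simp]: "inv_letter x \<noteq> x" "x \<noteq> inv_letter x"
  and fst_inv_letter [simp]: "fst (inv_letter x) = fst x"
  and inv_letter_eq_iff [simp]: "inv_letter x = inv_letter y \<longleftrightarrow> x = y"
  by (cases x; cases y; auto simp: inv_letter_def)+

lemma inv_word_simps [simp]:
  "inv_word [] = []"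
  "inv_word (x # w) = inv_word w @ [inv_letter x]"
  "inv_word (u @ v) = inv_word v @ inv_word u"
  "inv_word (inv_word w) = w"
  "inv_word w = [] \<longleftrightarrow> w = []"
  "length (inv_word w) = length w"
  "fst ` set (inv_word w) = fst ` set w"
  by (auto simp: inv_word_def rev_map[symmetric] comp_def image_image)

lemma in_lists_Times_UNIV_iff: "w \<in> lists (A \<times> UNIV) \<longleftrightarrow> fst ` set w \<subseteq> A"
  by (auto simp: mem_Times_iff)

lemma inv_letter_in_Times_iff [simp]: "inv_letter x \<in> A \<times> UNIV \<longleftrightarrow> x \<in> A \<times> UNIV"
  by (simp add: inv_letter_def mem_Times_iff)

lemma inv_word_in_lists_iff [simp]: "inv_word w \<in> lists (A \<times> UNIV) \<longleftrightarrow> w \<in> lists (A \<times> UNIV)"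
  by (induction w) (auto simp: inv_letter_def mem_Times_iff)

lemma hd_inv_word: "w \<noteq> [] \<Longrightarrow> hd (inv_word w) = inv_letter (last w)"
  by (simp add: inv_word_def hd_rev last_map)

lemma last_inv_word: "w \<noteq> [] \<Longrightarrow> last (inv_word w) = inv_letter (hd w)"
  by (simp add: inv_word_def last_rev hd_map)

lemma prefix_in_lists: "prefix p w \<Longrightarrow> w \<in> lists A \<Longrightarrow> p \<in> lists A"
  by (auto elim: prefixE)

lemma successively_eq_hd_last:
  "p \<noteq> [] \<Longrightarrow> successively (\<lambda>x y. f x = f y) p \<Longrightarrow> f (hd p) = f (last p)"
  by (induction p rule: induct_list012) auto

lemma reduced_word_iff_successively:
  "reduced_word w \<longleftrightarrow> successively (\<lambda>x y. y \<noteq> inv_letter x) w"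
proof -
  have "\<not> (fst x = fst y \<and> snd x \<noteq> snd y) \<longleftrightarrow> y \<noteq> inv_letter x" for x y :: "'a \<times> bool"
    by (cases x; cases y) (auto simp: inv_letter_def)
  then show ?thesis by (simp add: reduced_word_def successively_conv_nth)
qed

lemma reduced_word_Nil [simp]: "reduced_word []"
  and reduced_word_singleton [simp]: "reduced_word [x]"
  by (simp_all add: reduced_word_iff_successively)

lemma reduced_word_Cons:
  "reduced_word (x # w) \<longleftrightarrow> reduced_word w \<and> (w \<noteq> [] \<longrightarrow> hd w \<noteq> inv_letter x)"
  by (auto simp: reduced_word_iff_successively successively_Cons)

lemma reduced_word_append:
  "reduced_word (u @ v) \<longleftrightarrow>
     reduced_word u \<and> reduced_word v \<and> (u \<noteq> [] \<and> v \<noteq> [] \<longrightarrow> hd v \<noteq> inv_letter (last u))"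
  by (auto simp: reduced_word_iff_successively successively_append_iff)

lemma reduced_word_inv_word: "reduced_word w \<Longrightarrow> reduced_word (inv_word w)"
  by (induction w) (auto simp: reduced_word_append reduced_word_Cons hd_inv_word last_inv_word)

lemma reduced_word_append_cancel:
  assumes "reduced_word u" "reduced_word v"
  obtains \<alpha> \<gamma> \<beta> where "u = \<alpha> @ \<gamma>" "v = inv_word \<gamma> @ \<beta>" "reduced_word (\<alpha> @ \<beta>)"
  using assms
proof (induction u arbitrary: v thesis rule: rev_induct)
  case Nil
  then show ?case by (metis append_Nil inv_word_simps(1))
next
  case (snoc x u)
  show ?case
  proof (cases "v \<noteq> [] \<and> hd v = inv_letter x")
    case True
    then obtain v' where v: "v = inv_letter x # v'" by (cases v) auto
    have "reduced_word u" "reduced_word v'"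
      using snoc.prems v by (auto simp: reduced_word_append reduced_word_Cons)
    then obtain \<alpha> \<gamma> \<beta> where "u = \<alpha> @ \<gamma>" "v' = inv_word \<gamma> @ \<beta>" "reduced_word (\<alpha> @ \<beta>)"
      using snoc.IH by blast
    then show ?thesis
      using snoc.prems(1)[of \<alpha> "\<gamma> @ [x]" \<beta>] v by simp
  next
    case False
    then have "reduced_word ((u @ [x]) @ v)"
      unfolding reduced_word_append[of "u @ [x]" v] using snoc.prems by auto
    then show ?thesis
      using snoc.prems(1)[of "u @ [x]" "[]" v] by simp
  qed
qed

lemma reduced_word_first_block:
  assumes "reduced_word (x # w)"
  obtains n w' where "x # w = replicate (Suc n) x @ w'" "reduced_word w'"
    "w' \<noteq> [] \<Longrightarrow> fst (hd w') \<noteq> fst x"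
proof -
  define w' where "w' = dropWhile (\<lambda>z. z = x) (x # w)"
  define n where "n = length (takeWhile (\<lambda>z. z = x) w)"
  have "\<forall>z\<in>set (takeWhile (\<lambda>z. z = x) w). z = x"
    by (auto dest: set_takeWhileD)
  then have n: "takeWhile (\<lambda>z. z = x) (x # w) = replicate (Suc n) x"
    unfolding n_def by (simp add: replicate_length_same)
  have split: "x # w = replicate (Suc n) x @ w'"
    unfolding w'_def by (metis n takeWhile_dropWhile_id)
  then have "reduced_word (replicate (Suc n) x @ w')"
    using assms by simp
  then have "reduced_word w'" "w' \<noteq> [] \<Longrightarrow> hd w' \<noteq> inv_letter x"
    unfolding reduced_word_append by (auto split: if_splits)
  moreover have "w' \<noteq> [] \<Longrightarrow> hd w' \<noteq> x"
    using hd_dropWhile[of "\<lambda>z. z = x" "x # w"] unfolding w'_def by blast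
  ultimately have "w' \<noteq> [] \<Longrightarrow> fst (hd w') \<noteq> fst x"
    by (cases x, cases "hd w'") (auto simp: inv_letter_def)
  with split \<open>reduced_word w'\<close> show thesis by (rule that)
qed

section \<open>Power series in noncommuting variables and the Magnus map\<close>

type_synonym 'a series = "'a list \<Rightarrow> int"

fun series_mult :: "'a series \<Rightarrow> 'a series \<Rightarrow> 'a series" where
  "series_mult f g [] = f [] * g []"
| "series_mult f g (a # m) = f [] * g (a # m) + series_mult (\<lambda>m'. f (a # m')) g m"

lemma series_mult_eq_sum_splits:
  "series_mult f g m = (\<Sum>k\<le>length m. f (take k m) * g (drop k m))"
  by (induction m arbitrary: f) (simp_all add: sum.atMost_Suc_shift del: sum.atMost_Suc)

definition series_one :: "'a series" where
  "series_one m = (if m = [] then 1 else 0)"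

lemma series_one_simps [simp]: "series_one [] = 1" "series_one (a # m) = 0"
  by (simp_all add: series_one_def)

lemma series_mult_zero_left [simp]: "series_mult (\<lambda>_. 0) g m = 0"
  by (induction m) auto

lemma series_mult_add_left:
  "series_mult (\<lambda>m. f m + f' m) g m = series_mult f g m + series_mult f' g m"
  by (induction m arbitrary: f f') (auto simp: algebra_simps)

lemma series_mult_scale_left: "series_mult (\<lambda>m. c * f m) g m = c * series_mult f g m"
  by (induction m arbitrary: f) (auto simp: algebra_simps)

lemma series_mult_add_right:
  "series_mult f (\<lambda>m. g m + g' m) m = series_mult f g m + series_mult f g' m"
  by (induction m arbitrary: f) (auto simp: algebra_simps)

lemma series_mult_assoc: "series_mult (series_mult f g) h = series_mult f (series_mult g h)"
proof
  fix m show "series_mult (series_mult f g) h m = series_mult f (series_mult g h) m"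
  proof (induction m arbitrary: f g h)
    case (Cons a m)
    have "series_mult (series_mult f g) h (a # m)
        = f [] * g [] * h (a # m)
          + series_mult (\<lambda>m'. f [] * g (a # m') + series_mult (\<lambda>m'. f (a # m')) g m') h m"
      by simp
    also have "\<dots> = f [] * g [] * h (a # m) + f [] * series_mult (\<lambda>m'. g (a # m')) h m
                    + series_mult (series_mult (\<lambda>m'. f (a # m')) g) h m"
      by (simp add: series_mult_add_left series_mult_scale_left)
    also have "\<dots> = series_mult f (series_mult g h) (a # m)"
      using Cons by (simp add: algebra_simps)
    finally show ?case .
  qed simp
qed

lemma series_mult_one_left [simp]: "series_mult series_one g = g"
proof
  fix m show "series_mult series_one g m = g m"
    by (cases m) (simp_all add: series_one_def)
qed

lemma series_mult_one_right [simp]: "series_mult f series_one = f"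
proof
  fix m show "series_mult f series_one m = f m"
    by (induction m arbitrary: f) (auto simp: series_one_def)
qed

lemma series_mult_one_plus:
  "series_mult (\<lambda>m. f m + series_one m) (\<lambda>m. g m + series_one m) m
     = f m + g m + series_mult f g m + series_one m"
  by (simp add: series_mult_add_left series_mult_add_right)

text \<open>The Magnus map sends the letter \<open>s\<close> to \<open>1 + s\<close> and \<open>s\<inverse>\<close> to \<open>1 - s + s\<^sup>2 - \<dots>\<close>.\<close>

definition magnus_letter :: "'a \<times> bool \<Rightarrow> 'a series" where
  "magnus_letter x m =
     (if set m \<subseteq> {fst x} then (if snd x then (if length m \<le> 1 then 1 else 0) else (-1) ^ length m)
      else 0)"

lemma magnus_letter_Nil [simp]: "magnus_letter x [] = 1"
  by (simp add: magnus_letter_def)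

lemma magnus_letter_Cons:
  "magnus_letter x (a # m) =
     (if a \<noteq> fst x then 0 else if snd x then series_one m else - magnus_letter x m)"
  by (auto simp: magnus_letter_def series_one_def)

lemma series_mult_magnus_letter_inv_letter:
  "series_mult (magnus_letter x) (magnus_letter (inv_letter x)) = series_one"
proof
  fix m
  obtain s b where x: "x = (s, b)" by fastforce
  show "series_mult (magnus_letter x) (magnus_letter (inv_letter x)) m = series_one m"
  proof (cases b)
    case True
    show ?thesis
    proof (cases m)
      case (Cons a m')
      have "(\<lambda>m''. magnus_letter x (a # m'')) = (if a = s then series_one else (\<lambda>_. 0))"
        using x True by (auto simp: magnus_letter_Cons)
      then show ?thesis
        using x True Cons by (simp add: magnus_letter_Cons inv_letter_def)
    qed simp
  next
    case False
    show ?thesis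
    proof (induction m)
      case (Cons a m)
      have "(\<lambda>m''. magnus_letter x (a # m'')) = (\<lambda>m''. (if a = s then -1 else 0) * magnus_letter x m'')"
        using x False by (auto simp: magnus_letter_Cons)
      then show ?case
        using x False Cons
        by (auto simp: series_mult_scale_left magnus_letter_Cons inv_letter_def)
    qed simp
  qed
qed

definition univariate_in :: "'a \<Rightarrow> 'a series \<Rightarrow> bool" where
  "univariate_in s f \<longleftrightarrow> (\<forall>m. f m \<noteq> 0 \<longrightarrow> set m \<subseteq> {s})"

lemma univariate_in_Cons_other:
  assumes "univariate_in s f" "a \<noteq> s"
  shows "(\<lambda>m. f (a # m)) = (\<lambda>_. 0)"
  using assms unfolding univariate_in_def by fastforce

lemma univariate_in_shift: "univariate_in s f \<Longrightarrow> univariate_in s (\<lambda>m. f (a # m))"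
  unfolding univariate_in_def by (meson order_trans set_subset_Cons)

lemma univariate_in_magnus_letter: "univariate_in (fst x) (magnus_letter x)"
  by (simp add: univariate_in_def magnus_letter_def)

lemma univariate_in_series_one: "univariate_in s series_one"
  by (simp add: univariate_in_def series_one_def)

lemma univariate_in_mult:
  assumes f: "univariate_in s f" and g: "univariate_in s g"
  shows "univariate_in s (series_mult f g)"
  unfolding univariate_in_def
proof (intro allI impI)
  fix m show "series_mult f g m \<noteq> 0 \<Longrightarrow> set m \<subseteq> {s}"
    using f
  proof (induction m arbitrary: f)
    case (Cons a m)
    show ?case
    proof (cases "g (a # m) = 0")
      case True
      then have "series_mult (\<lambda>m'. f (a # m')) g m \<noteq> 0"
        using Cons.prems by simp
      moreover from this have "a = s"
        using univariate_in_Cons_other[OF Cons.prems(2)] by fastforce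
      ultimately show ?thesis
        using Cons.IH univariate_in_shift[OF Cons.prems(2)] by simp
    qed (use g in \<open>unfold univariate_in_def, blast\<close>)
  qed simp
qed

lemma series_mult_univariate_in_distinct_adj:
  assumes "univariate_in s f" "distinct_adj m"
  shows "series_mult f g m = f [] * g m + (if m \<noteq> [] \<and> hd m = s then f [s] * g (tl m) else 0)"
proof (cases m)
  case (Cons a m')
  show ?thesis
  proof (cases "a = s")
    case True
    have "series_mult (\<lambda>m''. f (s # m'')) g m' = f [s] * g m'"
    proof (cases m')
      case (Cons b m'')
      then have "b \<noteq> s" using assms(2) \<open>m = a # m'\<close> True by auto
      then show ?thesis
        using Cons univariate_in_Cons_other[OF univariate_in_shift[OF assms(1)]] by simp
    qed simp
    then show ?thesis using Cons True by simp
  qed (use Cons univariate_in_Cons_other[OF assms(1)] in simp)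
qed simp

definition magnus_word :: "('a \<times> bool) list \<Rightarrow> 'a series" where
  "magnus_word w = foldr (\<lambda>x. series_mult (magnus_letter x)) w series_one"

lemma magnus_word_Nil [simp]: "magnus_word [] = series_one"
  and magnus_word_Cons: "magnus_word (x # w) = series_mult (magnus_letter x) (magnus_word w)"
  by (simp_all add: magnus_word_def)

lemma magnus_word_append: "magnus_word (u @ v) = series_mult (magnus_word u) (magnus_word v)"
  by (induction u) (simp_all add: magnus_word_Cons series_mult_assoc)

lemma magnus_word_cancel: "magnus_word (w @ inv_word w) = series_one"
proof (induction w)
  case (Cons x w)
  have "(x # w) @ inv_word (x # w) = [x] @ (w @ inv_word w) @ [inv_letter x]"
    by simp
  then show ?case
    by (simp only: magnus_word_append[of "[x]"] magnus_word_append[of "w @ inv_word w"])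
      (simp add: Cons magnus_word_Cons series_mult_magnus_letter_inv_letter)
qed simp

lemma magnus_word_const [simp]: "magnus_word w [] = 1"
  by (induction w) (simp_all add: magnus_word_Cons)

lemma univariate_in_magnus_word_replicate: "univariate_in (fst x) (magnus_word (replicate n x))"
  by (induction n)
    (simp_all add: magnus_word_Cons univariate_in_series_one univariate_in_mult
      univariate_in_magnus_letter)

lemma magnus_word_replicate_linear_coeff:
  "magnus_word (replicate n x) [fst x] = (if snd x then int n else - int n)"
  by (induction n) (auto simp: magnus_word_Cons magnus_letter_def)

lemma magnus_word_replicate_append:
  assumes "distinct_adj m"
  shows "magnus_word (replicate n x @ w) m = magnus_word w m +
    (if m \<noteq> [] \<and> hd m = fst x then (if snd x then int n else - int n) * magnus_word w (tl m) else 0)"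
  using series_mult_univariate_in_distinct_adj[OF univariate_in_magnus_word_replicate assms]
    magnus_word_replicate_linear_coeff[of n x]
  by (simp add: magnus_word_append)

text \<open>If the maximal blocks of equal letters of a reduced word are \<open>s\<^sub>1^k\<^sub>1, \<dots>, s\<^sub>n^k\<^sub>n\<close>
  (with \<open>s\<^sub>i \<noteq> s\<^sub>i\<^sub>+\<^sub>1\<close> and \<open>k\<^sub>i \<noteq> 0\<close>), the monomial \<open>s\<^sub>1 \<dots> s\<^sub>n\<close> has coefficient
  \<open>k\<^sub>1 \<dots> k\<^sub>n\<close> in its Magnus series, and no longer monomial without adjacent repetitions occurs.\<close>

lemma magnus_word_top_monomial:
  assumes "reduced_word w"
  shows "\<exists>m. distinct_adj m \<and> set m \<subseteq> fst ` set w \<and> magnus_word w m \<noteq> 0 \<and>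
    (w \<noteq> [] \<longrightarrow> m \<noteq> [] \<and> hd m = fst (hd w)) \<and>
    (\<forall>m'. distinct_adj m' \<and> length m < length m' \<longrightarrow> magnus_word w m' = 0)"
  using assms
proof (induction "length w" arbitrary: w rule: less_induct)
  case less
  show ?case
  proof (cases w)
    case Nil
    then show ?thesis by (intro exI[of _ "[]"]) (auto simp: series_one_def)
  next
    case (Cons x w1)
    then obtain n w2 where w: "w = replicate (Suc n) x @ w2" and "reduced_word w2"
      and w2: "w2 \<noteq> [] \<Longrightarrow> fst (hd w2) \<noteq> fst x"
      using less.prems reduced_word_first_block by metis
    then obtain m2 where m2: "distinct_adj m2" "set m2 \<subseteq> fst ` set w2" "magnus_word w2 m2 \<noteq> 0"
      "w2 \<noteq> [] \<longrightarrow> m2 \<noteq> [] \<and> hd m2 = fst (hd w2)"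
      "\<forall>m'. distinct_adj m' \<and> length m2 < length m' \<longrightarrow> magnus_word w2 m' = 0"
      using less.hyps[of w2] by auto
    have "w2 = [] \<Longrightarrow> m2 = []"
      using m2(3) by (auto simp: series_one_def split: if_splits)
    then have adj: "distinct_adj (fst x # m2)"
      using m2 w2 by (cases "w2 = []") (auto simp: distinct_adj_Cons)
    have "magnus_word w (fst x # m2) \<noteq> 0"
      using magnus_word_replicate_append[OF adj, of "Suc n" x w2] m2(3,5) adj w by simp
    moreover have "magnus_word w m' = 0"
      if "distinct_adj m'" "length (fst x # m2) < length m'" for m'
    proof -
      have "distinct_adj (tl m')"
        using that(1) by (cases m') (auto simp: distinct_adj_Cons)
      then show ?thesis
        using magnus_word_replicate_append[OF that(1), of "Suc n" x w2] m2(5) that w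
        by (cases m') auto
    qed
    moreover have "set (fst x # m2) \<subseteq> fst ` set w"
      using m2(2) w by auto
    ultimately show ?thesis
      using adj Cons by (intro exI[of _ "fst x # m2"]) auto
  qed
qed

section \<open>Ordering series by their leading coefficient\<close>

definition monomial_rank :: "'a set \<Rightarrow> 'a list \<Rightarrow> nat \<times> nat" where
  "monomial_rank S m = (length m, to_nat_on (lists S) m)"

definition leading_coeff_pos :: "'a set \<Rightarrow> 'a series \<Rightarrow> bool" where
  "leading_coeff_pos S f \<longleftrightarrow> (\<exists>m0\<in>lists S. 0 < f m0 \<and>
     (\<forall>m\<in>lists S. monomial_rank S m < monomial_rank S m0 \<longrightarrow> f m = 0))"

definition vanishes_below :: "'a set \<Rightarrow> 'a series \<Rightarrow> nat \<Rightarrow> bool" where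
  "vanishes_below S f n \<longleftrightarrow> (\<forall>m\<in>lists S. length m < n \<longrightarrow> f m = 0)"

lemma monomial_rank_inj:
  assumes "countable S" "m \<in> lists S" "m' \<in> lists S" "monomial_rank S m = monomial_rank S m'"
  shows "m = m'"
proof -
  have "inj_on (to_nat_on (lists S)) (lists S)"
    using assms(1) by (simp add: inj_on_to_nat_on)
  then show ?thesis
    using assms(2-) by (auto simp: monomial_rank_def inj_on_def)
qed

lemma length_le_if_monomial_rank_le: "monomial_rank S m \<le> monomial_rank S m' \<Longrightarrow> length m \<le> length m'"
  by (auto simp: monomial_rank_def less_eq_prod_def)

lemma vanishes_below_if_rank_less:
  "\<forall>m\<in>lists S. monomial_rank S m < monomial_rank S m0 \<longrightarrow> f m = 0 \<Longrightarrow>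
     vanishes_below S f (length m0)"
  by (simp add: vanishes_below_def monomial_rank_def)

lemma vanishes_below_one: "vanishes_below S f 1 \<longleftrightarrow> f [] = 0"
  by (auto simp: vanishes_below_def)

lemma series_mult_vanishes_below:
  assumes "vanishes_below S f a" "vanishes_below S g b"
  shows "vanishes_below S (series_mult f g) (a + b)"
  unfolding vanishes_below_def
proof (intro ballI impI)
  fix m assume m: "m \<in> lists S" "length m < a + b"
  have "f (take k m) * g (drop k m) = 0" if "k \<le> length m" for k
  proof (cases "k < a")
    case True
    moreover have "take k m \<in> lists S"
      using m(1) by (auto dest: in_set_takeD)
    ultimately show ?thesis
      using assms(1) unfolding vanishes_below_def by simp
  next
    case False
    then have "length (drop k m) < b"
      using m(2) that by simp
    moreover have "drop k m \<in> lists S"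
      using m(1) by (auto dest: in_set_dropD)
    ultimately show ?thesis
      using assms(2) unfolding vanishes_below_def by simp
  qed
  then show "series_mult f g m = 0"
    unfolding series_mult_eq_sum_splits by (intro sum.neutral) auto
qed

lemma leading_coeff_pos_if_agree_low_degree:
  assumes "m0 \<in> lists S" "0 < f m0" "\<forall>m\<in>lists S. monomial_rank S m < monomial_rank S m0 \<longrightarrow> f m = 0"
    and agree: "\<forall>m\<in>lists S. length m \<le> length m0 \<longrightarrow> h m = f m"
  shows "leading_coeff_pos S h"
  unfolding leading_coeff_pos_def
proof (intro bexI[OF _ assms(1)] conjI ballI impI)
  show "0 < h m0"
    using assms(1,2) agree by simp
  fix m assume "m \<in> lists S" "monomial_rank S m < monomial_rank S m0"
  moreover from this have "length m \<le> length m0"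
    using length_le_if_monomial_rank_le less_imp_le by blast
  ultimately show "h m = 0"
    using assms(3) agree by simp
qed

lemma leading_coeff_pos_or_neg:
  assumes "\<exists>m\<in>lists S. f m \<noteq> 0"
  shows "leading_coeff_pos S f \<or> leading_coeff_pos S (\<lambda>m. - f m)"
proof -
  let ?nonzero_rank = "\<lambda>k. \<exists>m\<in>lists S. f m \<noteq> 0 \<and> monomial_rank S m = k"
  obtain m0 where m0: "m0 \<in> lists S" "f m0 \<noteq> 0" "monomial_rank S m0 = (LEAST k. ?nonzero_rank k)"
    using LeastI_ex[of ?nonzero_rank] assms by blast
  have below: "\<forall>m\<in>lists S. monomial_rank S m < monomial_rank S m0 \<longrightarrow> f m = 0"
  proof (intro ballI impI)
    fix m assume "m \<in> lists S" "monomial_rank S m < monomial_rank S m0"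
    then show "f m = 0"
      using not_less_Least[of "monomial_rank S m" ?nonzero_rank] m0(3) by auto
  qed
  show ?thesis
  proof (cases "0 < f m0")
    case True
    then have "leading_coeff_pos S f"
      unfolding leading_coeff_pos_def using m0(1) below by blast
    then show ?thesis ..
  next
    case False
    then have "0 < - f m0"
      using m0(2) by simp
    then have "leading_coeff_pos S (\<lambda>m. - f m)"
      unfolding leading_coeff_pos_def using m0(1) below by auto
    then show ?thesis ..
  qed
qed

lemma not_leading_coeff_pos_both:
  assumes "countable S"
  shows "\<not> (leading_coeff_pos S f \<and> leading_coeff_pos S (\<lambda>m. - f m))"
proof
  assume "leading_coeff_pos S f \<and> leading_coeff_pos S (\<lambda>m. - f m)"
  then obtain m1 m2 where m1: "m1 \<in> lists S" "0 < f m1"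
      "\<forall>m\<in>lists S. monomial_rank S m < monomial_rank S m1 \<longrightarrow> f m = 0"
    and m2: "m2 \<in> lists S" "f m2 < 0"
      "\<forall>m\<in>lists S. monomial_rank S m < monomial_rank S m2 \<longrightarrow> f m = 0"
    unfolding leading_coeff_pos_def by auto
  consider "monomial_rank S m1 < monomial_rank S m2" | "monomial_rank S m2 < monomial_rank S m1"
    | "monomial_rank S m1 = monomial_rank S m2"
    using less_linear by blast
  then show False
  proof cases
    case 3
    then have "m1 = m2"
      using monomial_rank_inj[OF assms m1(1) m2(1)] by blast
    then show False
      using m1(2) m2(2) by simp
  qed (use m1 m2 in force)+
qed

text \<open>If \<open>(1 + f) (1 + g) = 1\<close>, then \<open>g\<close> agrees with \<open>-f\<close> up to the leading term of either.\<close>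

lemma leading_coeff_pos_inverse_iff:
  assumes "f [] = 0" "g [] = 0" "\<And>m. f m + g m + series_mult f g m = 0"
  shows "leading_coeff_pos S (\<lambda>m. - g m) \<longleftrightarrow> leading_coeff_pos S f"
proof -
  have agree: "\<forall>m\<in>lists S. length m \<le> n \<longrightarrow> f m = - g m"
    if "vanishes_below S f n \<or> vanishes_below S g n" for n
  proof (intro ballI impI)
    fix m assume m: "m \<in> lists S" "length m \<le> n"
    from that have "vanishes_below S (series_mult f g) (n + 1) \<or>
        vanishes_below S (series_mult f g) (1 + n)"
      using series_mult_vanishes_below assms(1,2) vanishes_below_one by metis
    then have "series_mult f g m = 0"
      using m by (auto simp: vanishes_below_def)
    then show "f m = - g m"
      using assms(3)[of m] by simp
  qed
  show ?thesis
  proof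
    assume "leading_coeff_pos S (\<lambda>m. - g m)"
    then obtain m0 where m0: "m0 \<in> lists S" "0 < - g m0"
      "\<forall>m\<in>lists S. monomial_rank S m < monomial_rank S m0 \<longrightarrow> - g m = 0"
      unfolding leading_coeff_pos_def by blast
    then have "vanishes_below S g (length m0)"
      using vanishes_below_if_rank_less[of S m0 "\<lambda>m. - g m"] by (simp add: vanishes_below_def)
    then have "\<forall>m\<in>lists S. length m \<le> length m0 \<longrightarrow> f m = - g m"
      using agree by blast
    with m0 show "leading_coeff_pos S f"
      by (rule leading_coeff_pos_if_agree_low_degree)
  next
    assume "leading_coeff_pos S f"
    then obtain m0 where m0: "m0 \<in> lists S" "0 < f m0"
      "\<forall>m\<in>lists S. monomial_rank S m < monomial_rank S m0 \<longrightarrow> f m = 0"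
      unfolding leading_coeff_pos_def by blast
    then have "vanishes_below S f (length m0)"
      by (intro vanishes_below_if_rank_less)
    then have "\<forall>m\<in>lists S. length m \<le> length m0 \<longrightarrow> - g m = f m"
      using agree by force
    with m0 show "leading_coeff_pos S (\<lambda>m. - g m)"
      by (rule leading_coeff_pos_if_agree_low_degree)
  qed
qed

lemma leading_coeff_pos_add:
  assumes "countable S"
    and m1: "m1 \<in> lists S" "0 < f m1" "\<forall>m\<in>lists S. monomial_rank S m < monomial_rank S m1 \<longrightarrow> f m = 0"
    and m2: "m2 \<in> lists S" "0 < g m2" "\<forall>m\<in>lists S. monomial_rank S m < monomial_rank S m2 \<longrightarrow> g m = 0"
    and le: "monomial_rank S m1 \<le> monomial_rank S m2"
    and e: "\<forall>m\<in>lists S. length m \<le> length m1 \<longrightarrow> e m = 0"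
  shows "leading_coeff_pos S (\<lambda>m. f m + g m + e m)"
  unfolding leading_coeff_pos_def
proof (intro bexI[OF _ m1(1)] conjI ballI impI)
  have "0 \<le> g m1"
  proof (cases "m1 = m2")
    case False
    then have "monomial_rank S m1 < monomial_rank S m2"
      using le monomial_rank_inj[OF assms(1) m1(1) m2(1)] by (auto simp: order_le_less)
    then show ?thesis
      using m2(3) m1(1) by simp
  qed (use m2 in simp)
  then show "0 < f m1 + g m1 + e m1"
    using m1 e by simp
  fix m assume m: "m \<in> lists S" "monomial_rank S m < monomial_rank S m1"
  moreover from this have "length m \<le> length m1"
    using length_le_if_monomial_rank_le less_imp_le by blast
  ultimately show "f m + g m + e m = 0"
    using m1(3) m2(3) le e by simp
qed

lemma leading_coeff_pos_mult:
  assumes "countable S" "f [] = 0" "g [] = 0" "leading_coeff_pos S f" "leading_coeff_pos S g"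
  shows "leading_coeff_pos S (\<lambda>m. f m + g m + series_mult f g m)"
proof -
  obtain m1 where m1: "m1 \<in> lists S" "0 < f m1"
    "\<forall>m\<in>lists S. monomial_rank S m < monomial_rank S m1 \<longrightarrow> f m = 0"
    using assms(4) unfolding leading_coeff_pos_def by blast
  obtain m2 where m2: "m2 \<in> lists S" "0 < g m2"
    "\<forall>m\<in>lists S. monomial_rank S m < monomial_rank S m2 \<longrightarrow> g m = 0"
    using assms(5) unfolding leading_coeff_pos_def by blast
  have "vanishes_below S (series_mult f g) (length m1 + 1)"
    using series_mult_vanishes_below vanishes_below_if_rank_less[OF m1(3)] assms(3) vanishes_below_one
    by metis
  moreover have "vanishes_below S (series_mult f g) (1 + length m2)"
    using series_mult_vanishes_below vanishes_below_if_rank_less[OF m2(3)] assms(2) vanishes_below_one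
    by metis
  ultimately have fg: "\<forall>m\<in>lists S. length m \<le> length m1 \<longrightarrow> series_mult f g m = 0"
    "\<forall>m\<in>lists S. length m \<le> length m2 \<longrightarrow> series_mult f g m = 0"
    by (auto simp: vanishes_below_def)
  show ?thesis
  proof (cases "monomial_rank S m1 \<le> monomial_rank S m2")
    case True
    show ?thesis
      by (rule leading_coeff_pos_add[OF assms(1) m1 m2 True fg(1)])
  next
    case False
    then have "leading_coeff_pos S (\<lambda>m. g m + f m + series_mult f g m)"
      using leading_coeff_pos_add[OF assms(1) m2 m1 _ fg(2)] by simp
    then show ?thesis
      by (simp add: add.commute)
  qed
qed

section \<open>Normal forms in free groups\<close>

definition eval_letter :: "('a, 'b) monoid_scheme \<Rightarrow> 'a \<times> bool \<Rightarrow> 'a" where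
  "eval_letter G x = (if snd x then fst x else inv\<^bsub>G\<^esub> (fst x))"

lemma eval_word_Nil [simp]: "eval_word G [] = \<one>\<^bsub>G\<^esub>"
  by (simp add: eval_word_def)

lemma eval_word_Cons [simp]: "eval_word G (x # w) = eval_letter G x \<otimes>\<^bsub>G\<^esub> eval_word G w"
  by (cases x) (simp add: eval_word_def eval_letter_def)

locale free_basis_group = group G for G (structure) +
  fixes S assumes basis: "free_basis G S"
begin

lemma basis_subset_carrier: "S \<subseteq> carrier G"
  and generate_basis: "generate G S = carrier G"
  using basis by (simp_all add: free_basis_def)

lemma eval_word_neq_one:
  "w \<noteq> [] \<Longrightarrow> reduced_word w \<Longrightarrow> w \<in> lists (S \<times> UNIV) \<Longrightarrow> eval_word G w \<noteq> \<one>"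
  using basis by (simp add: free_basis_def in_lists_Times_UNIV_iff)

lemma eval_letter_closed [simp]: "x \<in> S \<times> UNIV \<Longrightarrow> eval_letter G x \<in> carrier G"
  using basis_subset_carrier by (auto simp: eval_letter_def)

lemma eval_letter_inv_letter:
  "x \<in> S \<times> UNIV \<Longrightarrow> eval_letter G (inv_letter x) = inv (eval_letter G x)"
  using basis_subset_carrier by (auto simp: eval_letter_def inv_letter_def)

lemma eval_word_closed [simp]: "w \<in> lists (S \<times> UNIV) \<Longrightarrow> eval_word G w \<in> carrier G"
  by (induction w) auto

lemma eval_word_append:
  "u \<in> lists (S \<times> UNIV) \<Longrightarrow> v \<in> lists (S \<times> UNIV) \<Longrightarrow>
     eval_word G (u @ v) = eval_word G u \<otimes> eval_word G v"
  by (induction u) (auto simp: m_assoc)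

lemma eval_word_inv_word:
  "w \<in> lists (S \<times> UNIV) \<Longrightarrow> eval_word G (inv_word w) = inv (eval_word G w)"
proof (induction w)
  case (Cons x w)
  then have "eval_word G (inv_word (x # w)) = inv (eval_word G w) \<otimes> inv (eval_letter G x)"
    by (simp add: eval_word_append eval_letter_inv_letter)
  then show ?case
    using Cons.prems by (simp add: inv_mult_group)
qed simp

lemma reduced_word_unique:
  assumes "reduced_word u" "reduced_word v" "u \<in> lists (S \<times> UNIV)" "v \<in> lists (S \<times> UNIV)"
    and "eval_word G u = eval_word G v"
  shows "u = v"
  using assms
proof (induction u arbitrary: v)
  case Nil
  then show ?case using eval_word_neq_one[of v] by fastforce
next
  case (Cons x u)
  show ?case
  proof (cases "v \<noteq> [] \<and> hd v = x")
    case True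
    then obtain v' where v: "v = x # v'"
      by (cases v) auto
    then have "eval_word G u = eval_word G v'"
      using Cons.prems by (auto intro: l_cancel[of "eval_letter G x"])
    then show ?thesis
      using Cons.IH[of v'] Cons.prems v by (auto simp: reduced_word_Cons)
  next
    case False
    let ?w = "inv_word (x # u) @ v"
    have "reduced_word ?w"
      unfolding reduced_word_append[of "inv_word (x # u)"]
      using Cons.prems(1,2) False reduced_word_inv_word[of "x # u"]
      by (auto simp: last_inv_word simp del: inv_word_simps(2))
    moreover have "eval_word G ?w = \<one>"
      using Cons.prems by (simp only: eval_word_append eval_word_inv_word inv_word_in_lists_iff)
        (simp add: Cons.prems(5))
    ultimately show ?thesis
      using eval_word_neq_one[of ?w] Cons.prems(3,4) by auto
  qed
qed

lemma reduced_word_mult: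
  assumes "reduced_word u" "reduced_word v" "u \<in> lists (S \<times> UNIV)" "v \<in> lists (S \<times> UNIV)"
  obtains \<alpha> \<gamma> \<beta> where "u = \<alpha> @ \<gamma>" "v = inv_word \<gamma> @ \<beta>" "reduced_word (\<alpha> @ \<beta>)"
    "eval_word G (\<alpha> @ \<beta>) = eval_word G u \<otimes> eval_word G v"
proof -
  obtain \<alpha> \<gamma> \<beta> where split: "u = \<alpha> @ \<gamma>" "v = inv_word \<gamma> @ \<beta>" "reduced_word (\<alpha> @ \<beta>)"
    using reduced_word_append_cancel[OF assms(1,2)] by blast
  have letters: "\<alpha> \<in> lists (S \<times> UNIV)" "\<gamma> \<in> lists (S \<times> UNIV)" "\<beta> \<in> lists (S \<times> UNIV)"
    using assms(3,4) split by auto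
  have "eval_word G \<gamma> \<otimes> (inv (eval_word G \<gamma>) \<otimes> eval_word G \<beta>) = eval_word G \<beta>"
    using letters by (simp add: m_assoc[symmetric])
  then have "eval_word G u \<otimes> eval_word G v = eval_word G (\<alpha> @ \<beta>)"
    using letters by (simp add: split eval_word_append eval_word_inv_word m_assoc)
  then show thesis
    using that split by simp
qed

lemma exists_reduced_word:
  assumes "x \<in> carrier G"
  obtains w where "reduced_word w" "w \<in> lists (S \<times> UNIV)" "eval_word G w = x"
proof -
  have "x \<in> generate G S"
    using assms generate_basis by simp
  then have "\<exists>w. reduced_word w \<and> w \<in> lists (S \<times> UNIV) \<and> eval_word G w = x"
  proof (induction rule: generate.induct)
    case one
    then show ?case by (intro exI[of _ "[]"]) simp
  next
    case (incl s)
    then show ?case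
      using basis_subset_carrier by (intro exI[of _ "[(s, True)]"]) (auto simp: eval_letter_def)
  next
    case (inv s)
    then show ?case
      using basis_subset_carrier by (intro exI[of _ "[(s, False)]"]) (auto simp: eval_letter_def)
  next
    case (eng x y)
    then show ?case
      using reduced_word_mult by (metis append_in_lists_conv)
  qed
  then show thesis
    using that by blast
qed

definition nf :: "'a \<Rightarrow> ('a \<times> bool) list" where
  "nf x = (THE w. reduced_word w \<and> w \<in> lists (S \<times> UNIV) \<and> eval_word G w = x)"

lemma
  assumes "x \<in> carrier G"
  shows reduced_nf: "reduced_word (nf x)"
    and nf_in_lists: "nf x \<in> lists (S \<times> UNIV)"
    and eval_nf [simp]: "eval_word G (nf x) = x"
proof -
  obtain w where w: "reduced_word w" "w \<in> lists (S \<times> UNIV)" "eval_word G w = x"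
    using exists_reduced_word[OF assms] .
  have "reduced_word (nf x) \<and> nf x \<in> lists (S \<times> UNIV) \<and> eval_word G (nf x) = x"
    unfolding nf_def by (rule theI[of _ w]) (use w reduced_word_unique in blast)+
  then show "reduced_word (nf x)" "nf x \<in> lists (S \<times> UNIV)" "eval_word G (nf x) = x"
    by auto
qed

lemma nf_eval_word: "reduced_word w \<Longrightarrow> w \<in> lists (S \<times> UNIV) \<Longrightarrow> nf (eval_word G w) = w"
  using reduced_word_unique reduced_nf nf_in_lists eval_nf eval_word_closed by metis

lemma nf_one [simp]: "nf \<one> = []"
  using nf_eval_word[of "[]"] by simp

lemma nf_eq_Nil_iff: "x \<in> carrier G \<Longrightarrow> nf x = [] \<longleftrightarrow> x = \<one>"
  using eval_nf by fastforce

lemma nf_basis_letter: "x \<in> S \<times> UNIV \<Longrightarrow> nf (eval_letter G x) = [x]"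
  using nf_eval_word[of "[x]"] by simp

lemma nf_mult:
  assumes "x \<in> carrier G" "y \<in> carrier G"
  obtains \<alpha> \<gamma> \<beta> where "nf x = \<alpha> @ \<gamma>" "nf y = inv_word \<gamma> @ \<beta>" "nf (x \<otimes> y) = \<alpha> @ \<beta>"
proof -
  obtain \<alpha> \<gamma> \<beta> where split: "nf x = \<alpha> @ \<gamma>" "nf y = inv_word \<gamma> @ \<beta>"
    and "reduced_word (\<alpha> @ \<beta>)" and eval: "eval_word G (\<alpha> @ \<beta>) = eval_word G (nf x) \<otimes> eval_word G (nf y)"
    using reduced_word_mult[OF reduced_nf[OF assms(1)] reduced_nf[OF assms(2)]
        nf_in_lists[OF assms(1)] nf_in_lists[OF assms(2)]] by blast
  moreover from eval have "eval_word G (\<alpha> @ \<beta>) = x \<otimes> y"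
    using assms by simp
  moreover have "\<alpha> @ \<beta> \<in> lists (S \<times> UNIV)"
    using split nf_in_lists[OF assms(1)] nf_in_lists[OF assms(2)] by auto
  ultimately show thesis
    using that nf_eval_word by metis
qed

lemma nf_inv: "x \<in> carrier G \<Longrightarrow> nf (inv x) = inv_word (nf x)"
  using nf_eval_word[of "inv_word (nf x)"] reduced_word_inv_word[OF reduced_nf] nf_in_lists
    eval_word_inv_word[of "nf x"] by simp

lemma length_nf_mult_le:
  assumes "x \<in> carrier G" "y \<in> carrier G"
  shows "length (nf (x \<otimes> y)) \<le> length (nf x) + length (nf y)"
  by (rule nf_mult[OF assms]) simp

lemma nf_inv_mult_of_hd_neq:
  assumes "x \<in> carrier G" "y \<in> carrier G" "nf x \<noteq> []" "nf y \<noteq> []" "hd (nf x) \<noteq> hd (nf y)"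
  shows "nf (inv x \<otimes> y) = inv_word (nf x) @ nf y"
proof -
  have "reduced_word (inv_word (nf x) @ nf y)"
    using assms reduced_nf reduced_word_inv_word[of "nf x"] by (auto simp: reduced_word_append last_inv_word)
  moreover have "inv_word (nf x) @ nf y \<in> lists (S \<times> UNIV)"
    using nf_in_lists assms by simp
  ultimately show ?thesis
    using nf_eval_word[of "inv_word (nf x) @ nf y"] nf_in_lists assms
    by (simp add: eval_word_append eval_word_inv_word)
qed

lemma nf_eval_letter_mult:
  assumes "x \<in> S \<times> UNIV" "y \<in> carrier G" "nf y = [] \<or> hd (nf y) \<noteq> inv_letter x"
  shows "nf (eval_letter G x \<otimes> y) = x # nf y"
proof -
  have "reduced_word (x # nf y)" "x # nf y \<in> lists (S \<times> UNIV)"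
    using assms reduced_nf nf_in_lists by (auto simp: reduced_word_Cons)
  then show ?thesis
    using nf_eval_word[of "x # nf y"] assms(2) by simp
qed

lemma basis_neq_one: "s \<in> S \<Longrightarrow> s \<noteq> \<one>"
  using eval_word_neq_one[of "[(s, True)]"] basis_subset_carrier by (auto simp: eval_letter_def)

lemma letters_nf_generate:
  assumes "T \<subseteq> carrier G" "x \<in> generate G T"
  shows "fst ` set (nf x) \<subseteq> (\<Union>t\<in>T. fst ` set (nf t))"
  using assms(2)
proof (induction rule: generate.induct)
  case one
  then show ?case by simp
next
  case (incl t)
  then show ?case by blast
next
  case (inv t)
  then have "nf (inv t) = inv_word (nf t)"
    using assms(1) by (auto intro: nf_inv)
  then have "fst ` set (nf (inv t)) = fst ` set (nf t)"
    by simp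
  then show ?case
    using inv by blast
next
  case (eng x y)
  have "x \<in> carrier G" "y \<in> carrier G"
    using eng.hyps generate_in_carrier[OF assms(1)] by auto
  then obtain \<alpha> \<gamma> \<beta> where "nf x = \<alpha> @ \<gamma>" "nf y = inv_word \<gamma> @ \<beta>" "nf (x \<otimes> y) = \<alpha> @ \<beta>"
    by (rule nf_mult)
  then have "fst ` set (nf (x \<otimes> y)) \<subseteq> fst ` set (nf x) \<union> fst ` set (nf y)"
    by auto
  then show ?case
    using eng.IH by blast
qed

lemma finite_basis:
  assumes "finitely_generated G"
  shows "finite S"
proof -
  obtain T where T: "finite T" "T \<subseteq> carrier G" "generate G T = carrier G"
    using assms by (auto simp: finitely_generated_def)
  have "S \<subseteq> (\<Union>t\<in>T. fst ` set (nf t))"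
  proof
    fix s assume "s \<in> S"
    then have "s \<in> carrier G" "nf (eval_letter G (s, True)) = [(s, True)]"
      using nf_basis_letter[of "(s, True)"] basis_subset_carrier by auto
    then have "s \<in> carrier G" "s \<in> fst ` set (nf s)"
      by (simp_all add: eval_letter_def)
    then show "s \<in> (\<Union>t\<in>T. fst ` set (nf t))"
      using letters_nf_generate[OF T(2), of s] T(3) by blast
  qed
  then show ?thesis
    using T(1) finite_subset by blast
qed

lemma comm_group_if_basis_subset_singleton:
  assumes "a \<in> carrier G" "S \<subseteq> {a}"
  shows "comm_group G"
proof (rule group_comm_groupI)
  fix x y assume "x \<in> carrier G" "y \<in> carrier G"
  moreover have "carrier G \<subseteq> {a [^] k | k :: int. True}"
    using mono_generate[OF assms(2)] generate_basis generate_pow[OF assms(1)] by simp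
  ultimately obtain i j :: int where "x = a [^] i" "y = a [^] j"
    by blast
  then show "x \<otimes> y = y \<otimes> x"
    using assms(1) int_pow_mult[of a i j] int_pow_mult[of a j i] by (simp add: add.commute)
qed

lemma two_basis_elements:
  assumes "\<not> comm_group G"
  obtains a b where "a \<in> S" "b \<in> S" "a \<noteq> b"
proof (cases "S = {}")
  case True
  then show thesis
    using comm_group_if_basis_subset_singleton[of \<one>] assms by simp
next
  case False
  then obtain a where "a \<in> S"
    by blast
  moreover have "a \<in> carrier G"
    using \<open>a \<in> S\<close> basis_subset_carrier by blast
  ultimately show thesis
    using comm_group_if_basis_subset_singleton[of a] assms that by blast
qed

end

section \<open>Positive cones\<close>

context group
begin

lemma positive_coneI:
  assumes "P \<subseteq> carrier G" "\<And>x y. x \<in> P \<Longrightarrow> y \<in> P \<Longrightarrow> x \<otimes> y \<in> P"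
    and "\<And>x. x \<in> carrier G \<Longrightarrow> x \<noteq> \<one> \<Longrightarrow> x \<in> P \<or> inv x \<in> P"
    and "\<And>x. x \<in> P \<Longrightarrow> inv x \<notin> P" "\<one> \<notin> P"
  shows "positive_cone G P"
  unfolding positive_cone_def
proof (intro conjI ballI assms(1,2,5))
  have "x \<in> m_inv G ` P" if "inv x \<in> P" "x \<in> carrier G" for x
    using that by (metis image_eqI inv_inv)
  then show "carrier G = P \<union> m_inv G ` P \<union> {\<one>}"
    using assms(1,3) by auto
  show "P \<inter> m_inv G ` P = {}"
    using assms(1,4) by fastforce
  show "\<one> \<notin> m_inv G ` P"
    using assms(1,5) inv_eq_1_iff by fastforce
qed

lemma positive_cone_subset: "positive_cone G P \<Longrightarrow> P \<subseteq> carrier G"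
  and positive_cone_mult: "positive_cone G P \<Longrightarrow> x \<in> P \<Longrightarrow> y \<in> P \<Longrightarrow> x \<otimes> y \<in> P"
  by (auto simp: positive_cone_def)

lemma positive_cone_cases:
  assumes "positive_cone G P" "x \<in> carrier G" "x \<noteq> \<one>"
  shows "x \<in> P \<or> inv x \<in> P"
proof -
  have "x \<in> P \<or> x \<in> m_inv G ` P"
    using assms unfolding positive_cone_def by blast
  then show ?thesis
    using positive_cone_subset[OF assms(1)] by auto
qed

lemma positive_cone_max:
  assumes "positive_cone G P" "finite B" "B \<noteq> {}" "B \<subseteq> carrier G"
  shows "\<exists>M\<in>B. \<forall>b\<in>B. b = M \<or> inv b \<otimes> M \<in> P"
  using assms(2-)
proof (induction B rule: finite_ne_induct)
  case (insert x B)
  then obtain M where M: "M \<in> B" "\<forall>b\<in>B. b = M \<or> inv b \<otimes> M \<in> P"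
    by auto
  have carrier: "x \<in> carrier G" "M \<in> carrier G" "B \<subseteq> carrier G"
    using insert.prems M(1) by auto
  show ?case
  proof (cases "inv M \<otimes> x \<in> P")
    case True
    have "b = x \<or> inv b \<otimes> x \<in> P" if "b \<in> B" for b
    proof -
      have "b \<in> carrier G"
        using that carrier(3) by blast
      then have "inv b \<otimes> x = (inv b \<otimes> M) \<otimes> (inv M \<otimes> x)"
        using carrier by (simp add: m_assoc[symmetric]) (simp add: m_assoc)
      moreover have "b = M \<or> inv b \<otimes> M \<in> P"
        using M(2) that by blast
      ultimately show ?thesis
        using True positive_cone_mult[OF assms(1)] by auto
    qed
    then show ?thesis
      by blast
  next
    case False
    have "inv M \<otimes> x \<noteq> \<one>" if "x \<noteq> M"
      using that carrier inv_solve_left'[of \<one> M x] by auto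
    then have "x = M \<or> inv (inv M \<otimes> x) \<in> P"
      using positive_cone_cases[OF assms(1)] False carrier by blast
    then have "x = M \<or> inv x \<otimes> M \<in> P"
      using carrier by (simp add: inv_mult_group)
    then show ?thesis
      using M by blast
  qed
qed simp

lemma translate_into_negative_cone:
  assumes "positive_cone G P" "P \<noteq> {}" "finite B" "B \<subseteq> carrier G"
  obtains g where "g \<in> carrier G" "g <# B \<subseteq> m_inv G ` P"
proof (cases "B = {}")
  case True
  then show thesis
    using that[of \<one>] by (simp add: l_coset_def)
next
  case False
  obtain M where M: "M \<in> B" "\<forall>b\<in>B. b = M \<or> inv b \<otimes> M \<in> P"
    using positive_cone_max[OF assms(1,3) False assms(4)] by blast
  obtain p where p: "p \<in> P"
    using assms(2) by blast
  have carrier: "M \<in> carrier G" "p \<in> carrier G"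
    using M(1) assms(4) p positive_cone_subset[OF assms(1)] by auto
  have translate: "inv (M \<otimes> p) \<otimes> b \<in> m_inv G ` P" if "b \<in> B" for b
  proof -
    have b: "b \<in> carrier G"
      using that assms(4) by blast
    have "inv b \<otimes> M \<otimes> p \<in> P"
    proof (cases "b = M")
      case True
      then show ?thesis
        using p carrier by (simp add: m_assoc[symmetric])
    next
      case False
      then show ?thesis
        using M(2) that p positive_cone_mult[OF assms(1)] by blast
    qed
    moreover have "inv (M \<otimes> p) \<otimes> b = inv (inv b \<otimes> M \<otimes> p)"
      using b carrier by (simp add: inv_mult_group m_assoc)
    ultimately show ?thesis
      by blast
  qed
  have "inv (M \<otimes> p) <# B \<subseteq> m_inv G ` P"
    unfolding l_coset_def using translate by blast
  moreover have "inv (M \<otimes> p) \<in> carrier G"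
    using carrier by simp
  ultimately show thesis
    by (rule that[rotated])
qed

end

section \<open>Left orderability via the Magnus embedding\<close>

context free_basis_group
begin

definition magnus :: "'a \<Rightarrow> 'a series" where
  "magnus x = magnus_word (nf x)"

lemma magnus_mult:
  assumes "x \<in> carrier G" "y \<in> carrier G"
  shows "magnus (x \<otimes> y) = series_mult (magnus x) (magnus y)"
proof -
  obtain \<alpha> \<gamma> \<beta> where split: "nf x = \<alpha> @ \<gamma>" "nf y = inv_word \<gamma> @ \<beta>" "nf (x \<otimes> y) = \<alpha> @ \<beta>"
    using nf_mult[OF assms] .
  have "series_mult (magnus x) (magnus y)
      = series_mult (magnus_word \<alpha>) (series_mult (magnus_word (\<gamma> @ inv_word \<gamma>)) (magnus_word \<beta>))"
    by (simp add: magnus_def split magnus_word_append series_mult_assoc)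
  also have "\<dots> = magnus (x \<otimes> y)"
    by (simp only: magnus_word_cancel series_mult_one_left)
      (simp add: magnus_def split magnus_word_append)
  finally show ?thesis ..
qed

lemma magnus_one: "magnus \<one> = series_one"
  by (simp add: magnus_def)

definition magnus_minus_one :: "'a \<Rightarrow> 'a series" where
  "magnus_minus_one x m = magnus x m - series_one m"

lemma magnus_nontrivial:
  assumes "x \<in> carrier G" "x \<noteq> \<one>"
  shows "\<exists>m\<in>lists S. magnus_minus_one x m \<noteq> 0"
proof -
  have "nf x \<noteq> []"
    using nf_eq_Nil_iff assms by blast
  then obtain m where "set m \<subseteq> fst ` set (nf x)" "magnus x m \<noteq> 0" "m \<noteq> []"
    using magnus_word_top_monomial[OF reduced_nf[OF assms(1)]] unfolding magnus_def by blast
  moreover have "fst ` set (nf x) \<subseteq> S"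
    using nf_in_lists[OF assms(1)] by (simp add: in_lists_Times_UNIV_iff)
  ultimately show ?thesis
    by (intro bexI[of _ m]) (auto simp: neq_Nil_conv magnus_minus_one_def)
qed

lemma magnus_minus_one_mult:
  assumes "x \<in> carrier G" "y \<in> carrier G"
  shows "magnus_minus_one (x \<otimes> y) = (\<lambda>m. magnus_minus_one x m + magnus_minus_one y m
     + series_mult (magnus_minus_one x) (magnus_minus_one y) m)"
proof
  fix m
  have "magnus x = (\<lambda>m. magnus_minus_one x m + series_one m)"
    "magnus y = (\<lambda>m. magnus_minus_one y m + series_one m)"
    by (simp_all add: magnus_minus_one_def)
  then show "magnus_minus_one (x \<otimes> y) m = magnus_minus_one x m + magnus_minus_one y m
     + series_mult (magnus_minus_one x) (magnus_minus_one y) m"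
    using series_mult_one_plus[of "magnus_minus_one x" "magnus_minus_one y" m]
    by (simp add: magnus_mult[OF assms] magnus_minus_one_def[of "x \<otimes> y"])
qed

lemma magnus_minus_one_Nil: "magnus_minus_one x [] = 0"
  by (simp add: magnus_minus_one_def magnus_def)

lemma magnus_minus_one_one: "magnus_minus_one \<one> = (\<lambda>_. 0)"
  by (simp add: fun_eq_iff magnus_minus_one_def magnus_one)

definition magnus_cone :: "'a set" where
  "magnus_cone = {x \<in> carrier G. leading_coeff_pos S (magnus_minus_one x)}"

lemma inv_in_magnus_cone_iff:
  assumes "x \<in> carrier G"
  shows "inv x \<in> magnus_cone \<longleftrightarrow> leading_coeff_pos S (\<lambda>m. - magnus_minus_one x m)"
proof -
  have "magnus_minus_one (inv x) m + magnus_minus_one x m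
      + series_mult (magnus_minus_one (inv x)) (magnus_minus_one x) m = 0" for m
    using fun_cong[OF magnus_minus_one_mult[OF inv_closed[OF assms] assms], of m] assms
    by (simp add: magnus_minus_one_one)
  then show ?thesis
    using leading_coeff_pos_inverse_iff[of "magnus_minus_one (inv x)" "magnus_minus_one x"]
      magnus_minus_one_Nil assms
    by (simp add: magnus_cone_def)
qed

lemma positive_cone_magnus_cone:
  assumes "countable S"
  shows "positive_cone G magnus_cone"
proof (rule positive_coneI)
  show "magnus_cone \<subseteq> carrier G"
    by (auto simp: magnus_cone_def)
  show "x \<otimes> y \<in> magnus_cone" if "x \<in> magnus_cone" "y \<in> magnus_cone" for x y
    using that assms leading_coeff_pos_mult[of S "magnus_minus_one x" "magnus_minus_one y"]
      magnus_minus_one_mult[of x y] magnus_minus_one_Nil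
    by (simp add: magnus_cone_def)
  show "x \<in> magnus_cone \<or> inv x \<in> magnus_cone" if "x \<in> carrier G" "x \<noteq> \<one>" for x
    using leading_coeff_pos_or_neg[OF magnus_nontrivial[OF that]] inv_in_magnus_cone_iff[OF that(1)]
      that(1)
    by (auto simp: magnus_cone_def)
  show "inv x \<notin> magnus_cone" if "x \<in> magnus_cone" for x
    using that inv_in_magnus_cone_iff not_leading_coeff_pos_both[OF assms]
    by (auto simp: magnus_cone_def)
  show "\<one> \<notin> magnus_cone"
    by (simp add: magnus_cone_def magnus_minus_one_one leading_coeff_pos_def)
qed

lemma left_orderable: "countable S \<Longrightarrow> left_orderable G"
  using positive_cone_magnus_cone by (auto simp: left_orderable_def)

end

section \<open>Branches of the Cayley tree and \<open>r\<close>-paths\<close>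

lemma r_path_iff_successively:
  "r_path G T r p \<longleftrightarrow> p \<noteq> [] \<and> set p \<subseteq> carrier G \<and> successively (\<lambda>x y. word_dist G T x y \<le> r) p"
  by (simp add: r_path_def successively_conv_nth)

lemma (in group) foldr_mult_append:
  "set xs \<subseteq> carrier G \<Longrightarrow> set ys \<subseteq> carrier G \<Longrightarrow>
     foldr (\<otimes>) (xs @ ys) \<one> = foldr (\<otimes>) xs \<one> \<otimes> foldr (\<otimes>) ys \<one>"
  by (induction xs) (auto simp: m_assoc)

lemma (in group) generate_symmetric_eq_products:
  assumes "T \<subseteq> carrier G" "m_inv G ` T = T" "x \<in> generate G T"
  shows "\<exists>xs. set xs \<subseteq> T \<and> foldr (\<otimes>) xs \<one> = x"
  using assms(3)
proof (induction rule: generate.induct)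
  case one
  then show ?case by (intro exI[of _ "[]"]) simp
next
  case (incl t)
  then show ?case using assms(1) by (intro exI[of _ "[t]"]) auto
next
  case (inv t)
  then show ?case using assms by (intro exI[of _ "[inv t]"]) auto
next
  case (eng x y)
  then obtain xs ys where "set xs \<subseteq> T" "foldr (\<otimes>) xs \<one> = x" "set ys \<subseteq> T" "foldr (\<otimes>) ys \<one> = y"
    by blast
  then show ?case
    using assms(1) foldr_mult_append[of xs ys] by (intro exI[of _ "xs @ ys"]) auto
qed

lemma (in group) word_length_witness:
  assumes "T \<subseteq> carrier G" "m_inv G ` T = T" "generate G T = carrier G" "x \<in> carrier G"
  obtains xs where "length xs = word_length G T x" "set xs \<subseteq> T" "foldr (\<otimes>) xs \<one> = x"
proof -
  let ?spells = "\<lambda>n. \<exists>xs. length xs = n \<and> set xs \<subseteq> T \<and> foldr (\<otimes>) xs \<one> = x"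
  have "\<exists>n. ?spells n"
    using generate_symmetric_eq_products[OF assms(1,2)] assms(3,4) by blast
  then have "?spells (word_length G T x)"
    unfolding word_length_def by (rule LeastI_ex)
  then show thesis
    using that by blast
qed

context free_basis_group
begin

lemma length_nf_foldr_le:
  assumes "set xs \<subseteq> carrier G" "\<forall>t\<in>set xs. length (nf t) \<le> C"
  shows "length (nf (foldr (\<otimes>) xs \<one>)) \<le> C * length xs"
  using assms
proof (induction xs)
  case (Cons t xs)
  have "t \<in> carrier G" "set xs \<subseteq> carrier G"
    using Cons.prems(1) by auto
  then have "length (nf (foldr (\<otimes>) (t # xs) \<one>)) \<le> length (nf t) + length (nf (foldr (\<otimes>) xs \<one>))"
    using length_nf_mult_le by simp
  also have "\<dots> \<le> C + C * length xs"
    using Cons by (intro add_mono) auto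
  finally show ?case
    by simp
qed simp

lemma length_nf_le_word_dist:
  assumes "T \<subseteq> carrier G" "m_inv G ` T = T" "generate G T = carrier G"
    and "\<forall>t\<in>T. length (nf t) \<le> C" "x \<in> carrier G" "y \<in> carrier G"
  shows "length (nf (inv x \<otimes> y)) \<le> C * word_dist G T x y"
proof -
  have "inv x \<otimes> y \<in> carrier G"
    using assms(5,6) by simp
  then obtain xs where "length xs = word_length G T (inv x \<otimes> y)" "set xs \<subseteq> T"
    "foldr (\<otimes>) xs \<one> = inv x \<otimes> y"
    by (rule word_length_witness[OF assms(1-3)])
  then show ?thesis
    using length_nf_foldr_le[of xs C] assms(1,4) by (auto simp: word_dist_def)
qed

definition nf_ball :: "nat \<Rightarrow> 'a set" where
  "nf_ball R = {x \<in> carrier G. length (nf x) \<le> R}"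

lemma finite_nf_ball:
  assumes "finite S"
  shows "finite (nf_ball R)"
proof -
  have "nf_ball R \<subseteq> eval_word G ` {w. set w \<subseteq> S \<times> UNIV \<and> length w \<le> R}"
  proof
    fix x assume x: "x \<in> nf_ball R"
    then have "set (nf x) \<subseteq> S \<times> UNIV" "length (nf x) \<le> R" "eval_word G (nf x) = x"
      using nf_in_lists[of x] by (auto simp: nf_ball_def in_lists_conv_set)
    then show "x \<in> eval_word G ` {w. set w \<subseteq> S \<times> UNIV \<and> length w \<le> R}"
      by (metis (mono_tags, lifting) image_eqI mem_Collect_eq)
  qed
  moreover have "finite {w. set w \<subseteq> S \<times> (UNIV :: bool set) \<and> length w \<le> R}"
    using assms by (intro finite_lists_length_le) simp
  ultimately show ?thesis
    using finite_subset by blast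
qed

lemma hd_nf_eq_if_close:
  assumes "x \<in> carrier G" "y \<in> carrier G" "R < length (nf x)" "R < length (nf y)"
    and "length (nf (inv x \<otimes> y)) \<le> R"
  shows "hd (nf x) = hd (nf y)"
proof (rule ccontr)
  assume "hd (nf x) \<noteq> hd (nf y)"
  then have "nf (inv x \<otimes> y) = inv_word (nf x) @ nf y"
    using nf_inv_mult_of_hd_neq assms(1-4) by fastforce
  then show False
    using assms(3-5) by simp
qed

text \<open>The first letter of the normal form of \<open>g\<inverse> z\<close> tells in which branch of the Cayley
  tree, seen from \<open>g\<close>, the point \<open>z\<close> lies.\<close>

lemma r_path_avoiding_ball_stays_in_branch:
  assumes "g \<in> carrier G"
    and close: "\<And>x y. x \<in> carrier G \<Longrightarrow> y \<in> carrier G \<Longrightarrow> word_dist G T x y \<le> r \<Longrightarrow>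
      length (nf (inv x \<otimes> y)) \<le> R"
    and "r_path G T r p" "set p \<inter> (g <# nf_ball R) = {}"
  shows "hd (nf (inv g \<otimes> hd p)) = hd (nf (inv g \<otimes> last p))"
proof -
  have p: "set p \<subseteq> carrier G" "successively (\<lambda>x y. word_dist G T x y \<le> r) p"
    using assms(3) by (simp_all add: r_path_iff_successively)
  have far: "R < length (nf (inv g \<otimes> z))" if "z \<in> set p" for z
  proof (rule ccontr)
    have z: "z \<in> carrier G"
      using p(1) that by blast
    assume "\<not> R < length (nf (inv g \<otimes> z))"
    then have "g \<otimes> (inv g \<otimes> z) \<in> g <# nf_ball R"
      using assms(1) z unfolding l_coset_def nf_ball_def by auto
    moreover have "g \<otimes> (inv g \<otimes> z) = z"
      using assms(1) z by (simp add: m_assoc[symmetric])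
    ultimately show False
      using assms(4) that by auto
  qed
  have "successively (\<lambda>x y. hd (nf (inv g \<otimes> x)) = hd (nf (inv g \<otimes> y))) p"
  proof (rule successively_mono[OF p(2)])
    fix x y assume xy: "x \<in> set p" "y \<in> set p" "word_dist G T x y \<le> r"
    have "x \<in> carrier G" "y \<in> carrier G"
      using xy p(1) by auto
    then have "inv (inv g \<otimes> x) \<otimes> (inv g \<otimes> y) = inv x \<otimes> y"
      using assms(1) by (simp add: inv_mult_group m_assoc[symmetric]) (simp add: m_assoc)
    then show "hd (nf (inv g \<otimes> x)) = hd (nf (inv g \<otimes> y))"
      using hd_nf_eq_if_close[of "inv g \<otimes> x" "inv g \<otimes> y" R] close[of x y] far xy assms(1)
        \<open>x \<in> carrier G\<close> \<open>y \<in> carrier G\<close>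
      by simp
  qed
  then show ?thesis
    using assms(3) successively_eq_hd_last by (auto simp: r_path_def)
qed

end

section \<open>Cosets of finitely generated subgroups of infinite index\<close>

lemma (in group) finite_rcosets_if_covered:
  assumes "subgroup H G" "finite Q" "Q \<subseteq> carrier G"
    and "\<And>x. x \<in> carrier G \<Longrightarrow> \<exists>h\<in>H. \<exists>q\<in>Q. x = h \<otimes> q"
  shows "finite (rcosets H)"
proof -
  have "rcosets H \<subseteq> (\<lambda>q. H #> q) ` Q"
  proof
    fix C assume "C \<in> rcosets H"
    then obtain x where x: "x \<in> carrier G" "C = H #> x"
      unfolding RCOSETS_def by blast
    obtain h q where hq: "h \<in> H" "q \<in> Q" "x = h \<otimes> q"
      using assms(4)[OF x(1)] by blast
    have "h \<in> carrier G" "q \<in> carrier G"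
      using subgroup.mem_carrier[OF assms(1) hq(1)] hq(2) assms(3) by blast+
    then have "C = (H #> h) #> q"
      unfolding x(2) hq(3) using coset_mult_assoc[OF subgroup.subset[OF assms(1)]] by simp
    also have "H #> h = H"
      using subgroup.rcos_const[OF assms(1) is_group hq(1)] .
    finally show "C \<in> (\<lambda>q. H #> q) ` Q"
      using hq(2) by blast
  qed
  then show ?thesis
    by (rule finite_surj[OF assms(2)])
qed

context free_basis_group
begin

definition nf_prefix_values :: "'a set \<Rightarrow> 'a set" where
  "nf_prefix_values Y = (\<Union>y\<in>Y \<union> m_inv G ` Y \<union> {\<one>}. eval_word G ` {p. prefix p (nf y)})"

lemma finite_nf_prefix_values: "finite Y \<Longrightarrow> finite (nf_prefix_values Y)"
  by (simp add: nf_prefix_values_def flip: set_prefixes_eq)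

lemma one_in_nf_prefix_values: "\<one> \<in> nf_prefix_values Y"
  unfolding nf_prefix_values_def by force

lemma nf_prefix_values_subset_carrier:
  assumes "Y \<subseteq> carrier G"
  shows "nf_prefix_values Y \<subseteq> carrier G"
proof
  fix q assume "q \<in> nf_prefix_values Y"
  then obtain y p where y: "y \<in> Y \<union> m_inv G ` Y \<union> {\<one>}" "prefix p (nf y)" "q = eval_word G p"
    unfolding nf_prefix_values_def by blast
  then have "y \<in> carrier G"
    using assms by auto
  then have "p \<in> lists (S \<times> UNIV)"
    using nf_in_lists y(2) prefix_in_lists by blast
  then show "q \<in> carrier G"
    using y(3) by simp
qed

lemma prefix_nf_mult:
  assumes "x \<in> carrier G" "y \<in> carrier G" "prefix p (nf (x \<otimes> y))"
  shows "prefix p (nf x) \<or> (\<exists>p'. prefix p' (nf y) \<and> eval_word G p = x \<otimes> eval_word G p')"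
proof -
  obtain \<alpha> \<gamma> \<beta> where split: "nf x = \<alpha> @ \<gamma>" "nf y = inv_word \<gamma> @ \<beta>" "nf (x \<otimes> y) = \<alpha> @ \<beta>"
    using nf_mult[OF assms(1,2)] .
  have letters: "\<alpha> \<in> lists (S \<times> UNIV)" "\<gamma> \<in> lists (S \<times> UNIV)" "\<beta> \<in> lists (S \<times> UNIV)"
    using nf_in_lists[OF assms(1)] nf_in_lists[OF assms(2)] split by auto
  from assms(3) consider "prefix p \<alpha>" | us where "p = \<alpha> @ us" "prefix us \<beta>"
    unfolding split(3) prefix_append by blast
  then show ?thesis
  proof cases
    case 1
    then show ?thesis
      using split(1) by (auto simp: prefix_def)
  next
    case 2
    have us: "us \<in> lists (S \<times> UNIV)"
      using 2 letters(3) prefix_in_lists by blast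
    then have cancel: "eval_word G \<gamma> \<otimes> (inv (eval_word G \<gamma>) \<otimes> eval_word G us) = eval_word G us"
      using letters by (simp add: m_assoc[symmetric])
    have "x = eval_word G \<alpha> \<otimes> eval_word G \<gamma>"
      using eval_nf[OF assms(1)] split(1) letters by (simp add: eval_word_append)
    then have "eval_word G p = x \<otimes> eval_word G (inv_word \<gamma> @ us)"
      using 2 letters us by (simp add: eval_word_append eval_word_inv_word m_assoc cancel)
    moreover have "prefix (inv_word \<gamma> @ us) (nf y)"
      using 2 split(2) by simp
    ultimately show ?thesis
      by blast
  qed
qed

lemma prefix_nf_generate:
  assumes "Y \<subseteq> carrier G" "h \<in> generate G Y" "prefix p (nf h)"
  shows "\<exists>h'\<in>generate G Y. \<exists>q\<in>nf_prefix_values Y. eval_word G p = h' \<otimes> q"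
proof -
  have base: "\<exists>h'\<in>generate G Y. \<exists>q\<in>nf_prefix_values Y. eval_word G p = h' \<otimes> q"
    if "y \<in> Y \<union> m_inv G ` Y \<union> {\<one>}" "prefix p (nf y)" for y p
  proof -
    have "eval_word G p \<in> nf_prefix_values Y"
      unfolding nf_prefix_values_def using that by blast
    moreover from this have "eval_word G p = \<one> \<otimes> eval_word G p"
      using nf_prefix_values_subset_carrier[OF assms(1)] by auto
    ultimately show ?thesis
      using generate.one by blast
  qed
  show ?thesis
    using assms(2,3)
  proof (induction arbitrary: p rule: generate.induct)
    case (eng x y)
    have xy: "x \<in> carrier G" "y \<in> carrier G"
      using eng.hyps generate_in_carrier[OF assms(1)] by auto
    from prefix_nf_mult[OF xy eng.prems] show ?case
    proof
      assume "prefix p (nf x)"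
      then show ?case
        using eng.IH(1) by blast
    next
      assume "\<exists>p'. prefix p' (nf y) \<and> eval_word G p = x \<otimes> eval_word G p'"
      then obtain p' h' q where "eval_word G p = x \<otimes> (h' \<otimes> q)"
        and hq: "h' \<in> generate G Y" "q \<in> nf_prefix_values Y"
        using eng.IH(2) by metis
      moreover have "h' \<in> carrier G" "q \<in> carrier G"
        using hq generate_in_carrier[OF assms(1)] nf_prefix_values_subset_carrier[OF assms(1)]
        by auto
      ultimately have "eval_word G p = (x \<otimes> h') \<otimes> q"
        using xy by (simp add: m_assoc)
      then show ?case
        using generate.eng[OF eng.hyps(1) hq(1)] hq(2) by blast
    qed
  qed (use base in blast)+
qed

text \<open>Otherwise every element of \<open>G\<close> would be \<open>h q\<close> with \<open>h \<in> H\<close> and \<open>q\<close> in the finite set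
  of values of prefixes of normal forms of the generators of \<open>H\<close>.\<close>

lemma exists_word_not_prefix_of_subgroup:
  assumes "H \<in> fg_infinite_index_subgroups G"
  obtains y where "reduced_word y" "y \<in> lists (S \<times> UNIV)" "y \<noteq> []" "\<forall>h\<in>H. \<not> prefix y (nf h)"
proof -
  obtain Y where H: "subgroup H G" "finite Y" "Y \<subseteq> H" "generate G Y = H" "infinite (rcosets H)"
    using assms unfolding fg_infinite_index_subgroups_def by blast
  have Y: "Y \<subseteq> carrier G"
    using H(1,3) subgroup.subset by blast
  have "\<exists>y. reduced_word y \<and> y \<in> lists (S \<times> UNIV) \<and> y \<noteq> [] \<and> (\<forall>h\<in>H. \<not> prefix y (nf h))"
  proof (rule ccontr)
    assume "\<not> ?thesis"
    then have no_word: "\<exists>h\<in>H. prefix y (nf h)"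
      if "reduced_word y" "y \<in> lists (S \<times> UNIV)" "y \<noteq> []" for y
      using that by blast
    have "\<exists>h\<in>H. \<exists>q\<in>nf_prefix_values Y. x = h \<otimes> q" if x: "x \<in> carrier G" for x
    proof (cases "x = \<one>")
      case True
      then have "x = \<one> \<otimes> \<one>"
        by simp
      then show ?thesis
        using one_in_nf_prefix_values subgroup.one_closed[OF H(1)] by blast
    next
      case False
      then obtain h where "h \<in> H" "prefix (nf x) (nf h)"
        using no_word reduced_nf[OF x] nf_in_lists[OF x] nf_eq_Nil_iff[OF x] by blast
      then show ?thesis
        using prefix_nf_generate[OF Y] H(4) x by fastforce
    qed
    then have "finite (rcosets H)"
      using finite_rcosets_if_covered[OF H(1) finite_nf_prefix_values[OF H(2)]
          nf_prefix_values_subset_carrier[OF Y]] by blast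
    with H(5) show False ..
  qed
  then show thesis
    using that by blast
qed

lemma hd_nf_coset_not_prefix:
  assumes y: "reduced_word y" "y \<in> lists (S \<times> UNIV)" "y \<noteq> []" "\<forall>h\<in>H. \<not> prefix y (nf h)"
    and "H \<subseteq> carrier G" "h \<in> H" "t \<in> S \<times> UNIV" "t \<noteq> last y"
  shows "hd (nf (eval_letter G t \<otimes> inv (eval_word G y) \<otimes> h)) = t"
proof -
  have carrier: "inv (eval_word G y) \<in> carrier G" "h \<in> carrier G"
    using assms by auto
  have nf_inv_y: "nf (inv (eval_word G y)) = inv_word y"
    using nf_inv nf_eval_word y(1,2) by simp
  obtain \<alpha> \<gamma> \<beta> where split: "inv_word y = \<alpha> @ \<gamma>" "nf h = inv_word \<gamma> @ \<beta>"
    "nf (inv (eval_word G y) \<otimes> h) = \<alpha> @ \<beta>"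
    using nf_mult[OF carrier] unfolding nf_inv_y .
  have "\<alpha> \<noteq> []"
  proof
    assume "\<alpha> = []"
    then have "nf h = y @ \<beta>"
      using split by (metis append_Nil inv_word_simps(4))
    then have "prefix y (nf h)"
      by simp
    then show False
      using y(4) assms(6) by blast
  qed
  then have "hd (nf (inv (eval_word G y) \<otimes> h)) = inv_letter (last y)"
    using split(1,3) hd_inv_word[OF y(3)] by (metis hd_append2)
  then have "nf (eval_letter G t \<otimes> (inv (eval_word G y) \<otimes> h)) = t # nf (inv (eval_word G y) \<otimes> h)"
    using nf_eval_letter_mult[of t] assms(7,8) carrier by simp
  then show ?thesis
    using carrier assms(7) by (simp add: m_assoc)
qed

lemma exists_cosets_in_distinct_branches:
  assumes "H \<in> fg_infinite_index_subgroups G" "a \<in> S" "b \<in> S" "a \<noteq> b"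
  obtains z1 z2 where "z1 \<in> carrier G" "z2 \<in> carrier G"
    "\<And>h1 h2. h1 \<in> H \<Longrightarrow> h2 \<in> H \<Longrightarrow> hd (nf (z1 \<otimes> h1)) \<noteq> hd (nf (z2 \<otimes> h2))"
proof -
  obtain y where y: "reduced_word y" "y \<in> lists (S \<times> UNIV)" "y \<noteq> []" "\<forall>h\<in>H. \<not> prefix y (nf h)"
    using exists_word_not_prefix_of_subgroup[OF assms(1)] by blast
  have H: "H \<subseteq> carrier G"
    using assms(1) subgroup.subset unfolding fg_infinite_index_subgroups_def by blast
  define e where "e = (\<not> snd (last y))"
  define z where "z s = eval_letter G (s, e) \<otimes> inv (eval_word G y)" for s
  have "(s, e) \<noteq> last y" for s
    by (cases "last y") (auto simp: e_def)
  then have "hd (nf (z s \<otimes> h)) = (s, e)" if "s \<in> S" "h \<in> H" for s h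
    using hd_nf_coset_not_prefix[OF y H that(2)] that(1) by (simp add: z_def)
  moreover have "z a \<in> carrier G" "z b \<in> carrier G"
    using assms(2,3) y(2) by (simp_all add: z_def)
  ultimately show thesis
    using that[of "z a" "z b"] assms(2-4) by simp
qed

end

section \<open>Negative swamps\<close>

context free_basis_group
begin

text \<open>Conjugating a basis letter \<open>s\<^sup>\<plusminus>\<^sup>1\<close> by \<open>z u\<close> and multiplying it onto \<open>u\<close> moves \<open>z u\<close>
  to \<open>s\<^sup>\<plusminus>\<^sup>1 z u\<close>; choosing \<open>s\<close> different from the first letter of \<open>z u\<close> changes the branch,
  and one of the two signs keeps the product in the cone.\<close>

lemma exists_cone_element_in_other_branch:
  assumes "positive_cone G P" "a \<in> S" "b \<in> S" "a \<noteq> b" "z \<in> carrier G" "u \<in> P"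
  obtains v where "v \<in> P" "hd (nf (z \<otimes> v)) \<noteq> hd (nf (z \<otimes> u))"
proof -
  have u: "u \<in> carrier G"
    using assms(1,6) positive_cone_subset by blast
  define z1 where "z1 = z \<otimes> u"
  have z1: "z1 \<in> carrier G"
    using assms(5) u by (simp add: z1_def)
  obtain s where s: "s \<in> S" "fst (hd (nf z1)) \<noteq> s"
    using assms(2-4) by metis
  then have "s \<in> carrier G"
    using basis_subset_carrier by blast
  define k where "k e = inv z1 \<otimes> eval_letter G (s, e) \<otimes> z1" for e
  have "z1 \<otimes> k True \<otimes> inv z1 = s"
    using z1 \<open>s \<in> carrier G\<close>
    by (simp add: k_def eval_letter_def m_assoc[symmetric]) (simp add: m_assoc)
  then have "k True \<noteq> \<one>"
    using basis_neq_one[OF s(1)] z1 by auto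
  moreover have "inv (k True) = k False"
    using z1 \<open>s \<in> carrier G\<close> by (simp add: k_def eval_letter_def inv_mult_group m_assoc)
  moreover have "k e \<in> carrier G" for e
    using z1 s(1) by (simp add: k_def)
  ultimately obtain e where e: "k e \<in> P"
    using positive_cone_cases[OF assms(1)] by metis
  have "z \<otimes> (u \<otimes> k e) = eval_letter G (s, e) \<otimes> z1"
    using z1 u assms(5) s(1) by (simp add: k_def z1_def m_assoc[symmetric])
  moreover have "nf z1 = [] \<or> hd (nf z1) \<noteq> inv_letter (s, e)"
    using s(2) by (auto simp: inv_letter_def)
  ultimately have "nf (z \<otimes> (u \<otimes> k e)) = (s, e) # nf z1"
    using nf_eval_letter_mult[of "(s, e)" z1] s(1) z1 by simp
  moreover have "hd (nf z1) \<noteq> (s, e)"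
    using s(2) by auto
  ultimately have "hd (nf (z \<otimes> (u \<otimes> k e))) \<noteq> hd (nf (z \<otimes> u))"
    by (simp add: z1_def)
  moreover have "u \<otimes> k e \<in> P"
    using positive_cone_mult[OF assms(1,6) e] .
  ultimately show thesis
    using that by blast
qed

lemma r_disconnects_cone_translated_ball:
  assumes "positive_cone G P" "u \<in> P" "a \<in> S" "b \<in> S" "a \<noteq> b" "g \<in> carrier G"
    and close: "\<And>x y. x \<in> carrier G \<Longrightarrow> y \<in> carrier G \<Longrightarrow> word_dist G T x y \<le> r \<Longrightarrow>
      length (nf (inv x \<otimes> y)) \<le> R"
  shows "r_disconnects_cone G T r (g <# nf_ball R) P"
proof -
  obtain v where v: "v \<in> P" "hd (nf (inv g \<otimes> v)) \<noteq> hd (nf (inv g \<otimes> u))"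
    using exists_cone_element_in_other_branch[OF assms(1,3-5) inv_closed[OF assms(6)] assms(2)] .
  have "r_disconnects G T r (g <# nf_ball R) {u} {v}"
    unfolding r_disconnects_def
  proof (intro allI impI notI)
    fix p assume p: "r_path G T r p \<and> hd p \<in> {u} \<and> last p \<in> {v}"
      and "set p \<inter> (g <# nf_ball R) = {}"
    then have "hd (nf (inv g \<otimes> hd p)) = hd (nf (inv g \<otimes> last p))"
      using r_path_avoiding_ball_stays_in_branch[OF assms(6) close] by blast
    then show False
      using p v(2) by simp
  qed
  then show ?thesis
    unfolding r_disconnects_cone_def using assms(2) v(1) by blast
qed

lemma r_disconnects_cosets_translated_ball:
  assumes "H \<in> fg_infinite_index_subgroups G" "a \<in> S" "b \<in> S" "a \<noteq> b" "g \<in> carrier G"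
    and close: "\<And>x y. x \<in> carrier G \<Longrightarrow> y \<in> carrier G \<Longrightarrow> word_dist G T x y \<le> r \<Longrightarrow>
      length (nf (inv x \<otimes> y)) \<le> R"
  shows "\<exists>g1\<in>carrier G. \<exists>g2\<in>carrier G. r_disconnects G T r (g <# nf_ball R) (g1 <# H) (g2 <# H)"
proof -
  obtain z1 z2 where z: "z1 \<in> carrier G" "z2 \<in> carrier G"
    "\<And>h1 h2. h1 \<in> H \<Longrightarrow> h2 \<in> H \<Longrightarrow> hd (nf (z1 \<otimes> h1)) \<noteq> hd (nf (z2 \<otimes> h2))"
    using exists_cosets_in_distinct_branches[OF assms(1-4)] by blast
  have H_carrier: "H \<subseteq> carrier G"
    using assms(1) subgroup.subset unfolding fg_infinite_index_subgroups_def by blast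
  have shift: "\<exists>h\<in>H. inv g \<otimes> x = z \<otimes> h"
    if x: "x \<in> (g \<otimes> z) <# H" and z: "z \<in> carrier G" for x z
  proof -
    obtain h where "h \<in> H" "x = g \<otimes> z \<otimes> h"
      using x unfolding l_coset_def by blast
    moreover from this have "inv g \<otimes> x = z \<otimes> h"
      using assms(5) z H_carrier by (auto simp: m_assoc[symmetric])
    ultimately show ?thesis
      by blast
  qed
  have "r_disconnects G T r (g <# nf_ball R) ((g \<otimes> z1) <# H) ((g \<otimes> z2) <# H)"
    unfolding r_disconnects_def
  proof (intro allI impI notI)
    fix p assume p: "r_path G T r p \<and> hd p \<in> (g \<otimes> z1) <# H \<and> last p \<in> (g \<otimes> z2) <# H"
      and avoids: "set p \<inter> (g <# nf_ball R) = {}"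
    obtain h1 h2 where h: "h1 \<in> H" "inv g \<otimes> hd p = z1 \<otimes> h1" "h2 \<in> H" "inv g \<otimes> last p = z2 \<otimes> h2"
      using shift[of "hd p" z1] shift[of "last p" z2] p z(1,2) by blast
    have "hd (nf (inv g \<otimes> hd p)) = hd (nf (inv g \<otimes> last p))"
      using r_path_avoiding_ball_stays_in_branch[OF assms(5) close] p avoids by blast
    then show False
      using z(3)[OF h(1,3)] h(2,4) by simp
  qed
  then show ?thesis
    using assms(5) z(1,2) by blast
qed

lemma negative_swamp_exists:
  assumes "finite S" "a \<in> S" "b \<in> S" "a \<noteq> b"
    and T: "finite T" "T \<subseteq> carrier G" "m_inv G ` T = T" "generate G T = carrier G"
    and P: "positive_cone G P"
    and H: "H \<in> fg_infinite_index_subgroups G"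
  shows "\<exists>W. negative_swamp G T P H r W"
proof -
  define C where "C = (\<Sum>t\<in>T. length (nf t))"
  have "\<forall>t\<in>T. length (nf t) \<le> C"
    using T(1) unfolding C_def by (auto intro: member_le_sum)
  then have close: "length (nf (inv x \<otimes> y)) \<le> C * r"
    if "x \<in> carrier G" "y \<in> carrier G" "word_dist G T x y \<le> r" for x y
  proof -
    have "length (nf (inv x \<otimes> y)) \<le> C * word_dist G T x y"
      using length_nf_le_word_dist[OF T(2-4) \<open>\<forall>t\<in>T. length (nf t) \<le> C\<close> that(1,2)] .
    also have "\<dots> \<le> C * r"
      using that(3) by simp
    finally show ?thesis .
  qed
  obtain u where u: "u \<in> P"
    using positive_cone_cases[OF P, of a] assms(2) basis_subset_carrier basis_neq_one by blast
  moreover have "nf_ball (C * r) \<subseteq> carrier G"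
    by (auto simp: nf_ball_def)
  ultimately obtain g where g: "g \<in> carrier G" "g <# nf_ball (C * r) \<subseteq> m_inv G ` P"
    using translate_into_negative_cone[OF P _ finite_nf_ball[OF assms(1)]] by blast
  have "negative_swamp G T P H r (g <# nf_ball (C * r))"
    unfolding negative_swamp_def
  proof (intro conjI g(2))
    show "r_disconnects_cone G T r (g <# nf_ball (C * r)) P"
      using r_disconnects_cone_translated_ball[OF P u assms(2-4) g(1) close] .
    show "\<exists>g1\<in>carrier G. \<exists>g2\<in>carrier G. r_disconnects G T r (g <# nf_ball (C * r)) (g1 <# H) (g2 <# H)"
      using r_disconnects_cosets_translated_ball[OF H assms(2-4) g(1) close] .
  qed
  then show ?thesis ..
qed

end

theorem proposition5p4:
  fixes G :: "('a, 'b) monoid_scheme"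
  assumes "free_group G"
    and "finitely_generated G"
    and "\<not> comm_group G"
  shows "hucha G (fg_infinite_index_subgroups G)"
proof -
  obtain S where "group G" "free_basis G S"
    using assms(1) unfolding free_group_def by blast
  then interpret free_basis_group G S
    by (simp add: free_basis_group_def free_basis_group_axioms_def)
  have "finite S"
    using finite_basis[OF assms(2)] .
  obtain a b where "a \<in> S" "b \<in> S" "a \<noteq> b"
    using two_basis_elements[OF assms(3)] .
  show ?thesis
    unfolding hucha_def
  proof (intro conjI allI impI ballI)
    show "left_orderable G"
      using left_orderable countable_finite[OF \<open>finite S\<close>] by blast
    fix T P H and r :: nat
    assume "finite T \<and> T \<subseteq> carrier G \<and> m_inv G ` T = T \<and> generate G T = carrier G"
      and "positive_cone G P" "H \<in> fg_infinite_index_subgroups G"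
    then show "\<exists>W. negative_swamp G T P H r W"
      using negative_swamp_exists[OF \<open>finite S\<close> \<open>a \<in> S\<close> \<open>b \<in> S\<close> \<open>a \<noteq> b\<close>] by blast
  qed (use \<open>group G\<close> assms(2) in auto)
qed

end
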